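(* Let $L$ be a cosimplicial group. The map sending a morphism of cosimplicial groups $h\colon F\to L$ to $h^1(a_1)\in L_1$ is a bijection from the set of cosimplicial morphisms $F\to L$ onto $Z^1(L)$. The morphism $h_b$ corresponding to $b\in Z^1(L)$ is given by $h_b^n(a_j)=(d^0)^{j-1}(d^2)^{n-j}(b)$ for $1\le j\le n$.
   Context: $F$ is the cosimplicial group with $F_n$ the free group on $a_1,\dots,a_n$ ($F_0$ trivial), cofaces $d^i\colon F_{n-1}\to F_n$: $d^0(a_j)=a_{j+1}$; for $1\le i\le n-1$, $d^i(a_j)=a_j$ ($j<i$), $d^i(a_i)=a_ia_{i+1}$, $d^i(a_j)=a_{j+1}$ ($j>i$); $d^n(a_j)=a_j$; codegeneracies $s^i\colon F_{n+1}\to F_n$: $s^i(a_j)=a_j$ ($j\le i$), $s^i(a_{i+1})=e$, $s^i(a_j)=a_{j-1}$ ($j>i+1$). For a cosimplicial group $L$ (functor $\Delta\to\mathbf{Grp}$, $L_n=L([n])$, cofaces $d^i$, codegeneracies $s^i$), $Z^1(L)=\{b\in L_1: d^2(b)d^0(b)=d^1(b)\}$. A morphism of cosimplicial groups $h\colon F\to L$ is a natural transformation, with components $h^n\colon F_n\to L_n$. *)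

theory Defs
  imports "HOL-Algebra.Group"
begin

text \<open>Convention: a cosimplicial group is given by groups G n (= L_n), cofaces
  d n i : G n \<rightarrow> G (Suc n) for i \<le> Suc n (the paper's d^i : L_n \<rightarrow> L_(n+1)),
  and codegeneracies s n i : G (Suc n) \<rightarrow> G n for i \<le> n (the paper's s^i),
  all group homomorphisms, satisfying the cosimplicial identities.\<close>

definition cosimplicial_group ::
  "(nat \<Rightarrow> ('a, 'b) monoid_scheme) \<Rightarrow> (nat \<Rightarrow> nat \<Rightarrow> 'a \<Rightarrow> 'a) \<Rightarrow> (nat \<Rightarrow> nat \<Rightarrow> 'a \<Rightarrow> 'a) \<Rightarrow> bool"
where
  "cosimplicial_group G d s \<longleftrightarrow>
     (\<forall>n. group (G n)) \<and>
     (\<forall>n i. i \<le> Suc n \<longrightarrow> d n i \<in> hom (G n) (G (Suc n))) \<and>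
     (\<forall>n i. i \<le> n \<longrightarrow> s n i \<in> hom (G (Suc n)) (G n)) \<and>
     \<comment> \<open>d^j d^i = d^i d^(j-1), i < j\<close>
     (\<forall>n i j x. i < j \<and> j \<le> Suc (Suc n) \<and> x \<in> carrier (G n) \<longrightarrow>
        d (Suc n) j (d n i x) = d (Suc n) i (d n (j - 1) x)) \<and>
     \<comment> \<open>s^j d^i = d^i s^(j-1), i < j\<close>
     (\<forall>n i j x. i < j \<and> j \<le> Suc n \<and> x \<in> carrier (G (Suc n)) \<longrightarrow>
        s (Suc n) j (d (Suc n) i x) = d n i (s n (j - 1) x)) \<and>
     \<comment> \<open>s^j d^j = id = s^j d^(j+1)\<close>
     (\<forall>n j x. j \<le> n \<and> x \<in> carrier (G n) \<longrightarrow>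
        s n j (d n j x) = x \<and> s n j (d n (Suc j) x) = x) \<and>
     \<comment> \<open>s^j d^i = d^(i-1) s^j, i > j+1\<close>
     (\<forall>n i j x. Suc j < i \<and> i \<le> Suc (Suc n) \<and> x \<in> carrier (G (Suc n)) \<longrightarrow>
        s (Suc n) j (d (Suc n) i x) = d n (i - 1) (s n j x)) \<and>
     \<comment> \<open>s^j s^i = s^i s^(j+1), i \<le> j\<close>
     (\<forall>n i j x. i \<le> j \<and> j \<le> n \<and> x \<in> carrier (G (Suc (Suc n))) \<longrightarrow>
        s n j (s (Suc n) i x) = s n i (s (Suc n) (Suc j) x))"

definition Z1 :: "(nat \<Rightarrow> ('a, 'b) monoid_scheme) \<Rightarrow> (nat \<Rightarrow> nat \<Rightarrow> 'a \<Rightarrow> 'a) \<Rightarrow> 'a set" where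
  "Z1 G d = {b \<in> carrier (G 1). d 1 2 b \<otimes>\<^bsub>G 2\<^esub> d 1 0 b = d 1 1 b}"

fun dpow :: "(nat \<Rightarrow> nat \<Rightarrow> 'a \<Rightarrow> 'a) \<Rightarrow> nat \<Rightarrow> nat \<Rightarrow> nat \<Rightarrow> 'a \<Rightarrow> 'a" where
  "dpow d i 0 m x = x"
| "dpow d i (Suc k) m x = d (m + k) i (dpow d i k m x)"

type_synonym word = "(nat \<times> bool) list"
  \<comment> \<open>(j, True) is the letter a_j, (j, False) is a_j^(-1)\<close>

fun red :: "word \<Rightarrow> word" where
  "red [] = []"
| "red (x # xs) = (case red xs of
      [] \<Rightarrow> [x]
    | y # ys \<Rightarrow> (if fst y = fst x \<and> snd y \<noteq> snd x then ys else x # y # ys))"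

definition reduced :: "word \<Rightarrow> bool" where
  "reduced w \<longleftrightarrow> (\<forall>k. Suc k < length w \<longrightarrow>
      \<not> (fst (w ! k) = fst (w ! Suc k) \<and> snd (w ! k) \<noteq> snd (w ! Suc k)))"

definition Fgrp :: "nat \<Rightarrow> word monoid" where
  "Fgrp n = \<lparr> carrier = {w. reduced w \<and> (\<forall>x \<in> set w. 1 \<le> fst x \<and> fst x \<le> n)},
              mult = (\<lambda>u v. red (u @ v)), one = [] \<rparr>"

definition gen :: "nat \<Rightarrow> word" where
  "gen j = [(j, True)]"

definition inv_word :: "word \<Rightarrow> word" where
  "inv_word w = rev (map (\<lambda>(j, b). (j, \<not> b)) w)"

definition subst :: "(nat \<Rightarrow> word) \<Rightarrow> word \<Rightarrow> word" where
  "subst \<sigma> w = red (concat (map (\<lambda>(j, b). if b then \<sigma> j else inv_word (\<sigma> j)) w))"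

text \<open>Cofaces of F: Fd n i : F_n \<rightarrow> F_(Suc n), i \<le> Suc n (paper's d^i with target index m = Suc n).\<close>
definition Fd :: "nat \<Rightarrow> nat \<Rightarrow> word \<Rightarrow> word" where
  "Fd n i = subst (\<lambda>j.
      if i = 0 then gen (Suc j)
      else if i = Suc n then gen j
      else if j < i then gen j
      else if j = i then [(i, True), (Suc i, True)]
      else gen (Suc j))"

definition Fs :: "nat \<Rightarrow> nat \<Rightarrow> word \<Rightarrow> word" where
  "Fs n i = subst (\<lambda>j.
      if j \<le> i then gen j
      else if j = Suc i then []
      else gen (j - 1))"

text \<open>To make the set of morphisms a genuine set of natural
  transformations, each component is taken extensional (undefined off the carrier).\<close>
definition cosimp_morphs ::
  "(nat \<Rightarrow> ('a, 'b) monoid_scheme) \<Rightarrow> (nat \<Rightarrow> nat \<Rightarrow> 'a \<Rightarrow> 'a) \<Rightarrow> (nat \<Rightarrow> nat \<Rightarrow> 'a \<Rightarrow> 'a)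
     \<Rightarrow> (nat \<Rightarrow> word \<Rightarrow> 'a) set"
where
  "cosimp_morphs G d s = {h.
     (\<forall>n. h n \<in> hom (Fgrp n) (G n)) \<and>
     (\<forall>n w. w \<notin> carrier (Fgrp n) \<longrightarrow> h n w = undefined) \<and>
     (\<forall>n i w. i \<le> Suc n \<and> w \<in> carrier (Fgrp n) \<longrightarrow> h (Suc n) (Fd n i w) = d n i (h n w)) \<and>
     (\<forall>n i w. i \<le> n \<and> w \<in> carrier (Fgrp (Suc n)) \<longrightarrow> h n (Fs n i w) = s n i (h (Suc n) w))}"

end

theory Submission
  imports Defs
begin

text \<open>
  Write \<open>b = h\<^sup>1(a\<^sub>1)\<close>. Since \<open>d\<^sup>0\<close> shifts the generators of \<open>F\<close> and
  \<open>d\<^sup>2\<close> fixes \<open>a\<^sub>1\<close>, naturality forces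
  \<open>h\<^sup>n(a\<^sub>j) = (d\<^sup>0)\<^bsup>j-1\<^esup>(d\<^sup>2)\<^bsup>n-j\<^esup>(b)\<close>, so \<open>h\<close> is determined by \<open>b\<close>,
  and \<open>d\<^sup>1(a\<^sub>1) = a\<^sub>1a\<^sub>2\<close> forces the cocycle identity \<open>d\<^sup>2(b)d\<^sup>0(b) = d\<^sup>1(b)\<close>.
  Conversely, for a cocycle \<open>b\<close> these values extend uniquely to homomorphisms
  \<open>F\<^sub>n \<rightarrow> L\<^sub>n\<close>, and checking naturality on generators reduces, by the cosimplicial
  identities, to the tower \<open>(d\<^sup>2)\<^sup>k(b)\<close>: \<open>d\<^sup>i\<close> for \<open>i \<ge> 2\<close> and \<open>s\<^sup>i\<close> for
  \<open>i \<ge> 1\<close> move it up or down one level, \<open>d\<^sup>1\<close> splits it by the cocycle identity,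
  and \<open>s\<^sup>0\<close> kills it because the cocycle identity gives \<open>s\<^sup>0(b) = 1\<close>.
\<close>

definition cancel_cons :: "nat \<times> bool \<Rightarrow> word \<Rightarrow> word" where
  "cancel_cons x ys = (case ys of
      [] \<Rightarrow> [x]
    | y # zs \<Rightarrow> (if fst y = fst x \<and> snd y \<noteq> snd x then zs else x # y # zs))"

lemma red_Cons: "red (x # xs) = cancel_cons x (red xs)"
  by (simp add: cancel_cons_def)

declare red.simps(2) [simp del]

lemma reduced_Nil [simp]: "reduced []"
  and reduced_singleton [simp]: "reduced [x]"
  by (simp_all add: reduced_def)

lemma reduced_Cons_Cons [simp]:
  "reduced (x # y # ys) \<longleftrightarrow> \<not> (fst x = fst y \<and> snd x \<noteq> snd y) \<and> reduced (y # ys)"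
  by (auto simp: reduced_def All_less_Suc2 nth_Cons' less_Suc_eq_0_disj)

lemma reduced_ConsD: "reduced (x # ys) \<Longrightarrow> reduced ys"
  by (cases ys) auto

lemma reduced_cancel_cons: "reduced ys \<Longrightarrow> reduced (cancel_cons x ys)"
  by (cases ys) (auto simp: cancel_cons_def dest: reduced_ConsD)

lemma cancel_cons_reduced: "reduced (x # ys) \<Longrightarrow> cancel_cons x ys = x # ys"
  by (cases ys) (auto simp: cancel_cons_def)

lemma reduced_red: "reduced (red w)"
  by (induct w) (simp_all add: red_Cons reduced_cancel_cons)

lemma red_reduced: "reduced w \<Longrightarrow> red w = w"
proof (induct w)
  case (Cons x w)
  then show ?case
    using reduced_ConsD [OF Cons.prems] by (simp add: red_Cons cancel_cons_reduced)
qed simp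

lemma set_cancel_cons: "set (cancel_cons x ys) \<subseteq> insert x (set ys)"
  by (cases ys) (auto simp: cancel_cons_def)

lemma set_red: "set (red w) \<subseteq> set w"
  by (induct w) (auto simp: red_Cons dest: set_cancel_cons [THEN subsetD])

lemma letters_inv_word [simp]: "fst ` set (inv_word w) = fst ` set w"
  by (force simp: inv_word_def)

lemma letters_subst: "fst ` set (subst \<sigma> w) \<subseteq> (\<Union>j \<in> fst ` set w. fst ` set (\<sigma> j))"
proof -
  have letters: "fst ` set (case x of (j, b) \<Rightarrow> if b then \<sigma> j else inv_word (\<sigma> j)) = fst ` set (\<sigma> (fst x))"
    for x by (cases x) simp
  have "fst ` set (subst \<sigma> w) \<subseteq> fst ` set (concat (map (\<lambda>(j, b). if b then \<sigma> j else inv_word (\<sigma> j)) w))"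
    unfolding subst_def by (rule image_mono [OF set_red])
  also have "\<dots> = (\<Union>j \<in> fst ` set w. fst ` set (\<sigma> j))"
    by (simp only: set_concat set_map image_Union image_image letters)
  finally show ?thesis .
qed

definition eval_letter :: "('a, 'b) monoid_scheme \<Rightarrow> (nat \<Rightarrow> 'a) \<Rightarrow> nat \<times> bool \<Rightarrow> 'a" where
  "eval_letter G f x = (if snd x then f (fst x) else inv\<^bsub>G\<^esub> f (fst x))"

primrec eval_word :: "('a, 'b) monoid_scheme \<Rightarrow> (nat \<Rightarrow> 'a) \<Rightarrow> word \<Rightarrow> 'a" where
  "eval_word G f [] = \<one>\<^bsub>G\<^esub>"
| "eval_word G f (x # w) = eval_letter G f x \<otimes>\<^bsub>G\<^esub> eval_word G f w"

lemma eval_word_cong: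
  "(\<And>j. j \<in> fst ` set w \<Longrightarrow> f j = g j) \<Longrightarrow> eval_word G f w = eval_word G g w"
proof (induct w)
  case (Cons x w)
  then have "f (fst x) = g (fst x)" and "eval_word G f w = eval_word G g w"
    by simp_all
  then show ?case
    by (simp add: eval_letter_def)
qed simp

context group
begin

lemma eval_letter_closed: "(\<And>j. f j \<in> carrier G) \<Longrightarrow> eval_letter G f x \<in> carrier G"
  by (auto simp: eval_letter_def)

lemma eval_word_closed: "(\<And>j. f j \<in> carrier G) \<Longrightarrow> eval_word G f w \<in> carrier G"
  by (induct w) (simp_all add: eval_letter_closed)

lemma eval_word_append:
  "(\<And>j. f j \<in> carrier G) \<Longrightarrow> eval_word G f (u @ v) = eval_word G f u \<otimes> eval_word G f v"
  by (induct u) (simp_all add: eval_letter_closed eval_word_closed m_assoc)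

lemma eval_word_gen: "f j \<in> carrier G \<Longrightarrow> eval_word G f (gen j) = f j"
  by (simp add: gen_def eval_letter_def)

lemma eval_word_cancel_cons:
  assumes f: "\<And>j. f j \<in> carrier G"
  shows "eval_word G f (cancel_cons x w) = eval_word G f (x # w)"
proof (cases w)
  case (Cons y ys)
  show ?thesis
  proof (cases "fst y = fst x \<and> snd y \<noteq> snd x")
    case True
    then have "eval_letter G f x \<otimes> eval_letter G f y = \<one>"
      using f by (cases "snd x") (auto simp: eval_letter_def)
    then have "eval_letter G f x \<otimes> (eval_letter G f y \<otimes> eval_word G f ys) = eval_word G f ys"
      using f by (simp add: m_assoc [symmetric] eval_letter_closed eval_word_closed)
    then show ?thesis
      using Cons True by (simp add: cancel_cons_def)
  qed (auto simp: Cons cancel_cons_def)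
qed (simp add: cancel_cons_def)

lemma eval_word_red: "(\<And>j. f j \<in> carrier G) \<Longrightarrow> eval_word G f (red w) = eval_word G f w"
  by (induct w) (simp_all add: red_Cons eval_word_cancel_cons)

lemma eval_word_inv_word:
  assumes f: "\<And>j. f j \<in> carrier G"
  shows "eval_word G f (inv_word w) = inv (eval_word G f w)"
proof (induct w)
  case (Cons x w)
  have "inv_word (x # w) = inv_word w @ [(fst x, \<not> snd x)]"
    by (cases x) (simp add: inv_word_def)
  moreover have "eval_letter G f (fst x, \<not> snd x) = inv (eval_letter G f x)"
    using f by (auto simp: eval_letter_def)
  ultimately show ?case
    using Cons f by (simp add: eval_word_append eval_letter_closed eval_word_closed inv_mult_group)
qed (simp add: inv_word_def)

lemma eval_word_subst:
  assumes f: "\<And>j. f j \<in> carrier G"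
  shows "eval_word G f (subst \<sigma> w) = eval_word G (\<lambda>j. eval_word G f (\<sigma> j)) w"
proof -
  have "eval_word G f (concat (map (\<lambda>(j, b). if b then \<sigma> j else inv_word (\<sigma> j)) w))
      = eval_word G (\<lambda>j. eval_word G f (\<sigma> j)) w"
    by (induct w) (auto simp: f eval_word_append eval_word_inv_word eval_letter_def)
  then show ?thesis
    by (simp add: subst_def eval_word_red f)
qed

end

lemma eval_word_hom:
  assumes "group G" "group H" "h \<in> hom G H" "\<And>j. f j \<in> carrier G"
  shows "h (eval_word G f w) = eval_word H (h \<circ> f) w"
proof -
  interpret group_hom G H h
    using assms by (simp add: group_hom_def group_hom_axioms_def)
  show ?thesis
    using assms(4) by (induct w) (simp_all add: eval_letter_def G.eval_word_closed)
qed

lemma carrier_Fgrp: "w \<in> carrier (Fgrp n) \<longleftrightarrow> reduced w \<and> fst ` set w \<subseteq> {1..n}"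
  by (auto simp: Fgrp_def)

lemma mult_Fgrp: "u \<otimes>\<^bsub>Fgrp n\<^esub> v = red (u @ v)"
  by (simp add: Fgrp_def)

lemma red_in_Fgrp: "fst ` set w \<subseteq> {1..n} \<Longrightarrow> red w \<in> carrier (Fgrp n)"
  using set_red [of w] by (auto simp: carrier_Fgrp reduced_red)

lemma subst_in_Fgrp:
  assumes "\<And>j. j \<in> fst ` set w \<Longrightarrow> fst ` set (\<sigma> j) \<subseteq> {1..m}"
  shows "subst \<sigma> w \<in> carrier (Fgrp m)"
proof -
  have "fst ` set (subst \<sigma> w) \<subseteq> {1..m}"
    using letters_subst [of \<sigma> w] assms by blast
  moreover have "reduced (subst \<sigma> w)"
    by (simp add: subst_def reduced_red)
  ultimately show ?thesis
    by (simp add: carrier_Fgrp)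
qed

lemma gen_in_Fgrp: "j \<in> {1..n} \<Longrightarrow> gen j \<in> carrier (Fgrp n)"
  by (simp add: carrier_Fgrp gen_def)

lemma red_gen [simp]: "red (gen j) = gen j"
  by (simp add: gen_def red_reduced)

definition Fd_letter :: "nat \<Rightarrow> nat \<Rightarrow> nat \<Rightarrow> word" where
  "Fd_letter n i j =
     (if i = 0 then gen (Suc j)
      else if i = Suc n then gen j
      else if j < i then gen j
      else if j = i then [(i, True), (Suc i, True)]
      else gen (Suc j))"

definition Fs_letter :: "nat \<Rightarrow> nat \<Rightarrow> nat \<Rightarrow> word" where
  "Fs_letter n i j = (if j \<le> i then gen j else if j = Suc i then [] else gen (j - 1))"

lemma Fd_eq_subst: "Fd n i = subst (Fd_letter n i)"
  by (simp add: Fd_def Fd_letter_def [abs_def])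

lemma Fs_eq_subst: "Fs n i = subst (Fs_letter n i)"
  by (simp add: Fs_def Fs_letter_def [abs_def])

lemma Fd_gen: "Fd n i (gen j) = red (Fd_letter n i j)"
  by (simp add: Fd_eq_subst subst_def gen_def)

lemma Fd_in_Fgrp: "w \<in> carrier (Fgrp n) \<Longrightarrow> i \<le> Suc n \<Longrightarrow> Fd n i w \<in> carrier (Fgrp (Suc n))"
  unfolding Fd_eq_subst
  by (rule subst_in_Fgrp) (auto simp: carrier_Fgrp Fd_letter_def gen_def)

lemma Fs_in_Fgrp: "w \<in> carrier (Fgrp (Suc n)) \<Longrightarrow> i \<le> n \<Longrightarrow> Fs n i w \<in> carrier (Fgrp n)"
  unfolding Fs_eq_subst
  by (rule subst_in_Fgrp) (auto simp: carrier_Fgrp Fs_letter_def gen_def)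

lemma dpow_Suc_left: "dpow d i (Suc k) m x = dpow d i k (Suc m) (d m i x)"
  by (induct k) simp_all

definition gen_value :: "(nat \<Rightarrow> nat \<Rightarrow> 'a \<Rightarrow> 'a) \<Rightarrow> 'a \<Rightarrow> nat \<Rightarrow> nat \<Rightarrow> 'a" where
  "gen_value d b n j = dpow d 0 (j - 1) (Suc n - j) (dpow d 2 (n - j) 1 b)"

text \<open>The value \<open>\<one>\<close> off \<open>{1..n}\<close> only makes the assignment land in the carrier;
  words of \<open>F\<^sub>n\<close> never use those letters.\<close>

definition gen_assignment ::
  "(nat \<Rightarrow> ('a, 'b) monoid_scheme) \<Rightarrow> (nat \<Rightarrow> nat \<Rightarrow> 'a \<Rightarrow> 'a) \<Rightarrow> 'a \<Rightarrow> nat \<Rightarrow> nat \<Rightarrow> 'a"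
where
  "gen_assignment G d b n j = (if j \<in> {1..n} then gen_value d b n j else \<one>\<^bsub>G n\<^esub>)"

definition cocycle_morphism ::
  "(nat \<Rightarrow> ('a, 'b) monoid_scheme) \<Rightarrow> (nat \<Rightarrow> nat \<Rightarrow> 'a \<Rightarrow> 'a) \<Rightarrow> 'a \<Rightarrow> nat \<Rightarrow> word \<Rightarrow> 'a"
where
  "cocycle_morphism G d b n w =
     (if w \<in> carrier (Fgrp n) then eval_word (G n) (gen_assignment G d b n) w else undefined)"

lemma interval_index_cases:
  assumes "j \<in> {1..n}"
  obtains t k where "j = Suc t" and "n = Suc (k + t)"
  using assms by (intro that [of "j - 1" "n - j"]) auto

locale cosimplicial =
  fixes G :: "nat \<Rightarrow> ('a, 'b) monoid_scheme"
    and d :: "nat \<Rightarrow> nat \<Rightarrow> 'a \<Rightarrow> 'a"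
    and s :: "nat \<Rightarrow> nat \<Rightarrow> 'a \<Rightarrow> 'a"
  assumes cosimplicial_group: "cosimplicial_group G d s"
begin

lemma group: "group (G n)"
  using cosimplicial_group by (simp add: cosimplicial_group_def)

lemma coface_hom: "i \<le> Suc n \<Longrightarrow> d n i \<in> hom (G n) (G (Suc n))"
  using cosimplicial_group by (simp add: cosimplicial_group_def)

lemma codeg_hom: "i \<le> n \<Longrightarrow> s n i \<in> hom (G (Suc n)) (G n)"
  using cosimplicial_group by (simp add: cosimplicial_group_def)

lemma coface_coface:
  "i < j \<Longrightarrow> j \<le> Suc (Suc n) \<Longrightarrow> x \<in> carrier (G n) \<Longrightarrow>
    d (Suc n) j (d n i x) = d (Suc n) i (d n (j - 1) x)"
  using cosimplicial_group by (simp add: cosimplicial_group_def)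

lemma codeg_coface_less:
  "i < j \<Longrightarrow> j \<le> Suc n \<Longrightarrow> x \<in> carrier (G (Suc n)) \<Longrightarrow>
    s (Suc n) j (d (Suc n) i x) = d n i (s n (j - 1) x)"
  using cosimplicial_group by (simp add: cosimplicial_group_def)

lemma codeg_coface_same: "j \<le> n \<Longrightarrow> x \<in> carrier (G n) \<Longrightarrow> s n j (d n j x) = x"
  using cosimplicial_group by (simp add: cosimplicial_group_def)

lemma codeg_coface_Suc: "j \<le> n \<Longrightarrow> x \<in> carrier (G n) \<Longrightarrow> s n j (d n (Suc j) x) = x"
  using cosimplicial_group by (simp add: cosimplicial_group_def)

lemma codeg_coface_greater:
  "Suc j < i \<Longrightarrow> i \<le> Suc (Suc n) \<Longrightarrow> x \<in> carrier (G (Suc n)) \<Longrightarrow>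
    s (Suc n) j (d (Suc n) i x) = d n (i - 1) (s n j x)"
  using cosimplicial_group by (simp add: cosimplicial_group_def)

lemma coface_group_hom: "i \<le> Suc n \<Longrightarrow> group_hom (G n) (G (Suc n)) (d n i)"
  by (simp add: group_hom_def group_hom_axioms_def group coface_hom)

lemma codeg_group_hom: "i \<le> n \<Longrightarrow> group_hom (G (Suc n)) (G n) (s n i)"
  by (simp add: group_hom_def group_hom_axioms_def group codeg_hom)

lemma coface_closed: "i \<le> Suc n \<Longrightarrow> x \<in> carrier (G n) \<Longrightarrow> d n i x \<in> carrier (G (Suc n))"
  using group_hom.hom_closed [OF coface_group_hom] .

lemma coface_mult:
  "i \<le> Suc n \<Longrightarrow> x \<in> carrier (G n) \<Longrightarrow> y \<in> carrier (G n) \<Longrightarrow>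
    d n i (x \<otimes>\<^bsub>G n\<^esub> y) = d n i x \<otimes>\<^bsub>G (Suc n)\<^esub> d n i y"
  using group_hom.hom_mult [OF coface_group_hom] .

lemma coface_one: "i \<le> Suc n \<Longrightarrow> d n i \<one>\<^bsub>G n\<^esub> = \<one>\<^bsub>G (Suc n)\<^esub>"
  using group_hom.hom_one [OF coface_group_hom] .

lemma codeg_closed: "i \<le> n \<Longrightarrow> x \<in> carrier (G (Suc n)) \<Longrightarrow> s n i x \<in> carrier (G n)"
  using group_hom.hom_closed [OF codeg_group_hom] .

lemma codeg_mult:
  "i \<le> n \<Longrightarrow> x \<in> carrier (G (Suc n)) \<Longrightarrow> y \<in> carrier (G (Suc n)) \<Longrightarrow>
    s n i (x \<otimes>\<^bsub>G (Suc n)\<^esub> y) = s n i x \<otimes>\<^bsub>G n\<^esub> s n i y"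
  using group_hom.hom_mult [OF codeg_group_hom] .

lemma codeg_one: "i \<le> n \<Longrightarrow> s n i \<one>\<^bsub>G (Suc n)\<^esub> = \<one>\<^bsub>G n\<^esub>"
  using group_hom.hom_one [OF codeg_group_hom] .

lemma dpow_closed: "i \<le> Suc m \<Longrightarrow> x \<in> carrier (G m) \<Longrightarrow> dpow d i k m x \<in> carrier (G (m + k))"
  by (induct k) (simp_all add: coface_closed)

lemma dpow_mult:
  "i \<le> Suc m \<Longrightarrow> x \<in> carrier (G m) \<Longrightarrow> y \<in> carrier (G m) \<Longrightarrow>
    dpow d i k m (x \<otimes>\<^bsub>G m\<^esub> y) = dpow d i k m x \<otimes>\<^bsub>G (m + k)\<^esub> dpow d i k m y"
  by (induct k) (simp_all add: coface_mult dpow_closed)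

lemma dpow_one: "i \<le> Suc m \<Longrightarrow> dpow d i k m \<one>\<^bsub>G m\<^esub> = \<one>\<^bsub>G (m + k)\<^esub>"
  by (induct k) (simp_all add: coface_one)

lemma coface_dpow0_low:
  "i \<le> t \<Longrightarrow> x \<in> carrier (G m) \<Longrightarrow> d (m + t) i (dpow d 0 t m x) = dpow d 0 (Suc t) m x"
proof (induct t arbitrary: i)
  case (Suc t)
  show ?case
  proof (cases i)
    case (Suc i')
    have "d (m + Suc t) i (d (m + t) 0 (dpow d 0 t m x))
        = d (m + Suc t) 0 (d (m + t) i' (dpow d 0 t m x))"
      using Suc.prems Suc coface_coface [of 0 i "m + t"] by (simp add: dpow_closed)
    then show ?thesis
      using Suc.prems Suc Suc.hyps [of i'] by simp
  qed simp
qed simp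

lemma coface_dpow0_high:
  "t \<le> i \<Longrightarrow> i \<le> Suc (m + t) \<Longrightarrow> x \<in> carrier (G m) \<Longrightarrow>
    d (m + t) i (dpow d 0 t m x) = dpow d 0 t (Suc m) (d m (i - t) x)"
proof (induct t arbitrary: i)
  case (Suc t)
  have "d (m + Suc t) i (d (m + t) 0 (dpow d 0 t m x))
      = d (m + Suc t) 0 (d (m + t) (i - 1) (dpow d 0 t m x))"
    using Suc.prems coface_coface [of 0 i "m + t"] by (simp add: dpow_closed)
  then show ?case
    using Suc.prems Suc.hyps [of "i - 1"] by (simp add: dpow_Suc_left)
qed simp

lemma codeg_dpow0_low:
  "i \<le> t \<Longrightarrow> x \<in> carrier (G m) \<Longrightarrow> s (m + t) i (dpow d 0 (Suc t) m x) = dpow d 0 t m x"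
proof (induct t arbitrary: i)
  case 0
  then show ?case
    by (simp add: codeg_coface_same)
next
  case (Suc t)
  show ?case
  proof (cases i)
    case 0
    then show ?thesis
      using codeg_coface_same [of 0 "m + Suc t" "dpow d 0 (Suc t) m x"] Suc.prems dpow_closed [of 0 m x "Suc t"]
      by simp
  next
    case (Suc i')
    have "s (m + Suc t) i (d (m + Suc t) 0 (dpow d 0 (Suc t) m x))
        = d (m + t) 0 (s (m + t) i' (dpow d 0 (Suc t) m x))"
      using Suc.prems Suc codeg_coface_less [of 0 i "m + t"] dpow_closed [of 0 m x "Suc t"] by simp
    then show ?thesis
      using Suc.prems Suc Suc.hyps [of i'] by simp
  qed
qed

lemma codeg_dpow0_high:
  "t \<le> i \<Longrightarrow> i \<le> m + t \<Longrightarrow> x \<in> carrier (G (Suc m)) \<Longrightarrow>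
    s (m + t) i (dpow d 0 t (Suc m) x) = dpow d 0 t m (s m (i - t) x)"
proof (induct t arbitrary: i)
  case (Suc t)
  have "s (m + Suc t) i (d (Suc m + t) 0 (dpow d 0 t (Suc m) x))
      = d (m + t) 0 (s (m + t) (i - 1) (dpow d 0 t (Suc m) x))"
    using Suc.prems codeg_coface_less [of 0 i "m + t"] dpow_closed [of 0 "Suc m" x t] by simp
  then show ?case
    using Suc.prems Suc.hyps [of "i - 1"] by simp
qed simp

context
  fixes b
  assumes cocycle: "b \<in> Z1 G d"
begin

text \<open>\<open>tower k\<close> lies in level \<open>k + 1\<close> and is the value there of \<open>a\<^sub>1\<close>;
  \<open>gen_image t k\<close> is the value of \<open>a\<^bsub>t+1\<^esub>\<close> in level \<open>k + t + 1\<close>.\<close>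

abbreviation tower :: "nat \<Rightarrow> 'a" where
  "tower k \<equiv> dpow d 2 k 1 b"

lemma tower_closed: "tower k \<in> carrier (G (Suc k))"
  using dpow_closed [of 2 1 b k] cocycle by (simp add: Z1_def)

lemma coface_tower: "2 \<le> i \<Longrightarrow> i \<le> k + 2 \<Longrightarrow> d (Suc k) i (tower k) = tower (Suc k)"
proof (induct k arbitrary: i)
  case 0
  then have "i = 2"
    by simp
  then show ?case
    by simp
next
  case (Suc k)
  show ?case
  proof (cases "i = 2")
    case False
    then have "d (Suc (Suc k)) i (d (Suc k) 2 (tower k)) = d (Suc (Suc k)) 2 (d (Suc k) (i - 1) (tower k))"
      using Suc.prems tower_closed by (intro coface_coface) auto
    also have "d (Suc k) (i - 1) (tower k) = tower (Suc k)"
      using Suc.prems False by (intro Suc.hyps) auto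
    finally show ?thesis
      by simp
  qed simp
qed

lemma tower_cocycle: "d (Suc k) 1 (tower k) = tower (Suc k) \<otimes>\<^bsub>G (Suc (Suc k))\<^esub> d (Suc k) 0 (tower k)"
proof (induct k)
  case 0
  then show ?case
    using cocycle by (simp add: Z1_def numeral_2_eq_2)
next
  case (Suc k)
  have "d (Suc (Suc k)) 1 (tower (Suc k)) = d (Suc (Suc k)) 3 (d (Suc k) 1 (tower k))"
    using coface_coface [of 1 3 "Suc k" "tower k"] tower_closed by simp
  also have "\<dots> = d (Suc (Suc k)) 3 (tower (Suc k)) \<otimes>\<^bsub>G (Suc (Suc (Suc k)))\<^esub>
      d (Suc (Suc k)) 3 (d (Suc k) 0 (tower k))"
    unfolding Suc using tower_closed by (intro coface_mult) (auto intro: coface_closed)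
  also have "d (Suc (Suc k)) 3 (tower (Suc k)) = tower (Suc (Suc k))"
    by (rule coface_tower) auto
  also have "d (Suc (Suc k)) 3 (d (Suc k) 0 (tower k)) = d (Suc (Suc k)) 0 (tower (Suc k))"
    using coface_coface [of 0 3 "Suc k" "tower k"] tower_closed by simp
  finally show ?case .
qed

lemma codeg_zero_tower: "s k 0 (tower k) = \<one>\<^bsub>G k\<^esub>"
proof (induct k)
  case 0
  have b: "b \<in> carrier (G 1)" and cocycle_eq: "d 1 2 b \<otimes>\<^bsub>G 2\<^esub> d 1 0 b = d 1 1 b"
    using cocycle by (simp_all add: Z1_def)
  have "s 1 0 (d 1 2 b) \<otimes>\<^bsub>G 1\<^esub> s 1 0 (d 1 0 b) = s 1 0 (d 1 1 b)"
    using codeg_mult [of 0 1 "d 1 2 b" "d 1 0 b"] cocycle_eq b coface_closed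
    by (simp add: numeral_2_eq_2)
  then have "d 0 1 (s 0 0 b) \<otimes>\<^bsub>G 1\<^esub> b = b"
    using b codeg_coface_same [of 0 1 b] codeg_coface_Suc [of 0 1 b]
      codeg_coface_greater [of 0 2 0 b] by (simp add: numeral_2_eq_2)
  then have "d 0 1 (s 0 0 b) = \<one>\<^bsub>G 1\<^esub>"
    using group.r_cancel_one [OF group] b codeg_closed coface_closed by simp
  then have "s 0 0 (d 0 1 (s 0 0 b)) = \<one>\<^bsub>G 0\<^esub>"
    using codeg_one [of 0 0] by simp
  then show ?case
    using codeg_coface_Suc [of 0 0 "s 0 0 b"] b codeg_closed by simp
next
  case (Suc k)
  have "s (Suc k) 0 (d (Suc k) 2 (tower k)) = d k 1 (s k 0 (tower k))"
    using codeg_coface_greater [of 0 2 k "tower k"] tower_closed by simp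
  then show ?case
    using Suc coface_one [of 1 k] by simp
qed

lemma codeg_tower: "1 \<le> i \<Longrightarrow> i \<le> Suc k \<Longrightarrow> s (Suc k) i (tower (Suc k)) = tower k"
proof (induct k arbitrary: i)
  case 0
  then have "i = 1"
    by simp
  then show ?case
    using codeg_coface_Suc [of 1 1 b] cocycle by (simp add: Z1_def numeral_2_eq_2)
next
  case (Suc k)
  consider "i = 1" | "i = 2" | "2 < i"
    using Suc.prems by linarith
  then show ?case
  proof cases
    case 1
    then show ?thesis
      using codeg_coface_Suc [of 1 "Suc (Suc k)", OF _ tower_closed [of "Suc k"]]
      by (simp add: numeral_2_eq_2)
  next
    case 2
    then show ?thesis
      using codeg_coface_same [of 2 "Suc (Suc k)", OF _ tower_closed [of "Suc k"]] by simp
  next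
    case 3
    then have "s (Suc (Suc k)) i (d (Suc (Suc k)) 2 (tower (Suc k)))
        = d (Suc k) 2 (s (Suc k) (i - 1) (tower (Suc k)))"
      using Suc.prems tower_closed [of "Suc k"] by (intro codeg_coface_less) auto
    then show ?thesis
      using 3 Suc by simp
  qed
qed

abbreviation gen_image :: "nat \<Rightarrow> nat \<Rightarrow> 'a" where
  "gen_image t k \<equiv> dpow d 0 t (Suc k) (tower k)"

lemma gen_image_closed: "gen_image t k \<in> carrier (G (Suc (k + t)))"
  using dpow_closed [of 0 "Suc k" "tower k" t] tower_closed by simp

lemma coface_gen_image_low: "i \<le> t \<Longrightarrow> d (Suc (k + t)) i (gen_image t k) = gen_image (Suc t) k"
  using coface_dpow0_low [of i t "tower k" "Suc k"] tower_closed by simp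

lemma coface_gen_image_mid:
  "d (Suc (k + t)) (Suc t) (gen_image t k) = gen_image t (Suc k) \<otimes>\<^bsub>G (Suc (Suc (k + t)))\<^esub> gen_image (Suc t) k"
proof -
  have "d (Suc (k + t)) (Suc t) (gen_image t k) = dpow d 0 t (Suc (Suc k)) (d (Suc k) 1 (tower k))"
    using coface_dpow0_high [of t "Suc t" "Suc k" "tower k"] tower_closed by simp
  also have "\<dots> = dpow d 0 t (Suc (Suc k)) (tower (Suc k) \<otimes>\<^bsub>G (Suc (Suc k))\<^esub> d (Suc k) 0 (tower k))"
    by (simp only: tower_cocycle)
  also have "\<dots> = gen_image t (Suc k) \<otimes>\<^bsub>G (Suc (Suc (k + t)))\<^esub> dpow d 0 t (Suc (Suc k)) (d (Suc k) 0 (tower k))"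
    using tower_closed [of "Suc k"] tower_closed [of k]
    by (subst dpow_mult) (auto intro: coface_closed simp del: dpow.simps(2))
  also have "dpow d 0 t (Suc (Suc k)) (d (Suc k) 0 (tower k)) = gen_image (Suc t) k"
    by (simp only: dpow_Suc_left)
  finally show ?thesis .
qed

lemma coface_gen_image_high:
  "Suc t < i \<Longrightarrow> i \<le> Suc (Suc (k + t)) \<Longrightarrow> d (Suc (k + t)) i (gen_image t k) = gen_image t (Suc k)"
  using coface_dpow0_high [of t i "Suc k" "tower k"] coface_tower [of "i - t" k] tower_closed by simp

lemma codeg_gen_image_low: "i \<le> t \<Longrightarrow> s (Suc (k + t)) i (gen_image (Suc t) k) = gen_image t k"
  using codeg_dpow0_low [of i t "tower k" "Suc k"] tower_closed by simp

lemma codeg_gen_image_mid: "s (k + t) t (gen_image t k) = \<one>\<^bsub>G (k + t)\<^esub>"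
  using codeg_dpow0_high [of t t k "tower k"] tower_closed codeg_zero_tower dpow_one [of 0 k t] by simp

lemma codeg_gen_image_high:
  "t < i \<Longrightarrow> i \<le> Suc (k + t) \<Longrightarrow> s (Suc (k + t)) i (gen_image t (Suc k)) = gen_image t k"
  using codeg_dpow0_high [of t i "Suc k" "tower (Suc k)"] codeg_tower [of "i - t" k] tower_closed [of "Suc k"]
  by simp

lemma gen_assignment_closed: "gen_assignment G d b n j \<in> carrier (G n)"
proof (cases "j \<in> {1..n}")
  case True
  then obtain t k where "j = Suc t" and "n = Suc (k + t)"
    by (rule interval_index_cases)
  then show ?thesis
    using gen_image_closed [of t k] by (auto simp: gen_assignment_def gen_value_def)
next
  case False
  then show ?thesis
    using monoid.one_closed [OF group.is_monoid [OF group [of n]]] by (auto simp: gen_assignment_def)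
qed

lemma eval_gen_assignment:
  assumes "j \<in> {1..n}"
  shows "eval_word (G n) (gen_assignment G d b n) (gen j) = gen_value d b n j"
proof -
  have "gen_assignment G d b n j = gen_value d b n j"
    using assms by (simp add: gen_assignment_def)
  then show ?thesis
    using group.eval_word_gen [OF group, of "gen_assignment G d b n" j, OF gen_assignment_closed] by simp
qed

lemma eval_Fd_letter:
  assumes j: "j \<in> {1..n}" and i: "i \<le> Suc n"
  shows "eval_word (G (Suc n)) (gen_assignment G d b (Suc n)) (Fd_letter n i j) = d n i (gen_value d b n j)"
proof -
  obtain t k where j_eq: "j = Suc t" and n_eq: "n = Suc (k + t)"
    using j by (rule interval_index_cases)
  consider "i \<le> t" | "i = Suc t" | "Suc t < i"
    by linarith
  then show ?thesis
  proof cases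
    case 1
    then have "Fd_letter n i j = gen (Suc j)"
      using j_eq n_eq by (simp add: Fd_letter_def)
    then show ?thesis
      using 1 j n_eq j_eq coface_gen_image_low [of i t k]
      by (simp add: eval_gen_assignment gen_value_def)
  next
    case 2
    then have "Fd_letter n i j = [(j, True), (Suc j, True)]"
      using j_eq n_eq by (simp add: Fd_letter_def)
    then show ?thesis
      using 2 j n_eq j_eq coface_gen_image_mid [of k t] gen_image_closed [of "Suc t" k]
      by (simp add: eval_letter_def gen_assignment_def gen_value_def monoid.r_one [OF group.is_monoid [OF group]])
  next
    case 3
    then have "Fd_letter n i j = gen j"
      using j_eq by (simp add: Fd_letter_def)
    then show ?thesis
      using 3 i j n_eq j_eq coface_gen_image_high [of t i k]
      by (simp add: eval_gen_assignment gen_value_def)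
  qed
qed

lemma eval_Fs_letter:
  assumes j: "j \<in> {1..Suc n}" and i: "i \<le> n"
  shows "eval_word (G n) (gen_assignment G d b n) (Fs_letter n i j) = s n i (gen_value d b (Suc n) j)"
proof -
  obtain t k where j_eq: "j = Suc t" and n_eq: "n = k + t"
    using j by (rule interval_index_cases) simp
  consider "t < i" | "i = t" | "i < t"
    by linarith
  then show ?thesis
  proof cases
    case 1
    then obtain k' where "k = Suc k'"
      using i n_eq by (cases k) auto
    then show ?thesis
      using 1 i j_eq n_eq codeg_gen_image_high [of t i k']
      by (simp add: Fs_letter_def eval_gen_assignment gen_value_def)
  next
    case 2
    then show ?thesis
      using j_eq n_eq codeg_gen_image_mid [of k t]
      by (simp add: Fs_letter_def gen_value_def)
  next
    case 3
    then obtain t' where "t = Suc t'"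
      by (cases t) auto
    then show ?thesis
      using 3 j_eq n_eq codeg_gen_image_low [of i t' k]
      by (simp add: Fs_letter_def eval_gen_assignment gen_value_def)
  qed
qed

lemma cocycle_morphism_hom: "cocycle_morphism G d b n \<in> hom (Fgrp n) (G n)"
proof (rule homI)
  show "cocycle_morphism G d b n w \<in> carrier (G n)" if "w \<in> carrier (Fgrp n)" for w
    using that group.eval_word_closed [OF group gen_assignment_closed]
    by (simp add: cocycle_morphism_def)
  show "cocycle_morphism G d b n (u \<otimes>\<^bsub>Fgrp n\<^esub> v)
      = cocycle_morphism G d b n u \<otimes>\<^bsub>G n\<^esub> cocycle_morphism G d b n v"
    if "u \<in> carrier (Fgrp n)" "v \<in> carrier (Fgrp n)" for u v
  proof -
    have "red (u @ v) \<in> carrier (Fgrp n)"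
      using that by (intro red_in_Fgrp) (auto simp: carrier_Fgrp)
    then show ?thesis
      using that group.eval_word_red [OF group gen_assignment_closed]
        group.eval_word_append [OF group gen_assignment_closed]
      by (simp add: cocycle_morphism_def mult_Fgrp)
  qed
qed

lemma cocycle_morphism_Fd:
  assumes w: "w \<in> carrier (Fgrp n)" and i: "i \<le> Suc n"
  shows "cocycle_morphism G d b (Suc n) (Fd n i w) = d n i (cocycle_morphism G d b n w)"
proof -
  have "cocycle_morphism G d b (Suc n) (Fd n i w)
      = eval_word (G (Suc n)) (gen_assignment G d b (Suc n)) (subst (Fd_letter n i) w)"
    using Fd_in_Fgrp [OF w i] by (simp add: cocycle_morphism_def Fd_eq_subst)
  also have "\<dots> = eval_word (G (Suc n))
      (\<lambda>j. eval_word (G (Suc n)) (gen_assignment G d b (Suc n)) (Fd_letter n i j)) w"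
    by (rule group.eval_word_subst [OF group gen_assignment_closed])
  also have "\<dots> = eval_word (G (Suc n)) (d n i \<circ> gen_assignment G d b n) w"
    using w i by (intro eval_word_cong) (auto simp: carrier_Fgrp eval_Fd_letter gen_assignment_def)
  also have "\<dots> = d n i (eval_word (G n) (gen_assignment G d b n) w)"
    by (rule eval_word_hom [symmetric, OF group group coface_hom [OF i] gen_assignment_closed])
  finally show ?thesis
    using w by (simp add: cocycle_morphism_def)
qed

lemma cocycle_morphism_Fs:
  assumes w: "w \<in> carrier (Fgrp (Suc n))" and i: "i \<le> n"
  shows "cocycle_morphism G d b n (Fs n i w) = s n i (cocycle_morphism G d b (Suc n) w)"
proof -
  have "cocycle_morphism G d b n (Fs n i w)
      = eval_word (G n) (gen_assignment G d b n) (subst (Fs_letter n i) w)"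
    using Fs_in_Fgrp [OF w i] by (simp add: cocycle_morphism_def Fs_eq_subst)
  also have "\<dots> = eval_word (G n) (\<lambda>j. eval_word (G n) (gen_assignment G d b n) (Fs_letter n i j)) w"
    by (rule group.eval_word_subst [OF group gen_assignment_closed])
  also have "\<dots> = eval_word (G n) (s n i \<circ> gen_assignment G d b (Suc n)) w"
    using w i by (intro eval_word_cong) (auto simp: carrier_Fgrp eval_Fs_letter gen_assignment_def)
  also have "\<dots> = s n i (eval_word (G (Suc n)) (gen_assignment G d b (Suc n)) w)"
    by (rule eval_word_hom [symmetric, OF group group codeg_hom [OF i] gen_assignment_closed])
  finally show ?thesis
    using w by (simp add: cocycle_morphism_def)
qed

lemma cocycle_morphism_in_morphs: "cocycle_morphism G d b \<in> cosimp_morphs G d s"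
  using cocycle_morphism_hom cocycle_morphism_Fd cocycle_morphism_Fs
  by (simp add: cosimp_morphs_def cocycle_morphism_def)

lemma cocycle_morphism_gen_one: "cocycle_morphism G d b 1 (gen 1) = b"
  using eval_gen_assignment [of 1 1] gen_in_Fgrp [of 1 1]
  by (simp add: cocycle_morphism_def gen_value_def)

end

context
  fixes h
  assumes morphism: "h \<in> cosimp_morphs G d s"
begin

lemma morphism_closed: "w \<in> carrier (Fgrp n) \<Longrightarrow> h n w \<in> carrier (G n)"
  using morphism by (auto simp: cosimp_morphs_def hom_def)

lemma morphism_mult:
  "u \<in> carrier (Fgrp n) \<Longrightarrow> v \<in> carrier (Fgrp n) \<Longrightarrow> h n (red (u @ v)) = h n u \<otimes>\<^bsub>G n\<^esub> h n v"
  using morphism hom_mult [of "h n" "Fgrp n" "G n" u v] by (simp add: cosimp_morphs_def mult_Fgrp)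

lemma morphism_Fd: "i \<le> Suc n \<Longrightarrow> w \<in> carrier (Fgrp n) \<Longrightarrow> h (Suc n) (Fd n i w) = d n i (h n w)"
  using morphism by (simp add: cosimp_morphs_def)

lemma morphism_Nil: "h n [] = \<one>\<^bsub>G n\<^esub>"
proof -
  have "[] \<in> carrier (Fgrp n)"
    by (simp add: carrier_Fgrp)
  then show ?thesis
    using morphism_mult [of "[]" n "[]"] morphism_closed group.r_cancel_one [OF group [of n], where x = "h n []" and a = "h n []"]
    by (simp add: red_reduced)
qed

lemma morphism_inverse_letter:
  assumes j: "j \<in> {1..n}"
  shows "h n [(j, False)] = inv\<^bsub>G n\<^esub> h n (gen j)"
proof -
  have letter: "[(j, False)] \<in> carrier (Fgrp n)"
    using j by (simp add: carrier_Fgrp)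
  have "red ([(j, False)] @ gen j) = []"
    by (simp add: gen_def red_Cons cancel_cons_def)
  then have "h n [(j, False)] \<otimes>\<^bsub>G n\<^esub> h n (gen j) = \<one>\<^bsub>G n\<^esub>"
    using morphism_mult [OF letter gen_in_Fgrp [OF j]] morphism_Nil by simp
  then show ?thesis
    using group.inv_equality [OF group [of n]] morphism_closed [OF letter] morphism_closed [OF gen_in_Fgrp [OF j]]
    by simp
qed

lemma morphism_eval_word: "w \<in> carrier (Fgrp n) \<Longrightarrow> h n w = eval_word (G n) (\<lambda>j. h n (gen j)) w"
proof (induct w)
  case Nil
  then show ?case
    by (simp add: morphism_Nil)
next
  case (Cons x w)
  then have x: "fst x \<in> {1..n}" and w: "w \<in> carrier (Fgrp n)" and letter: "[x] \<in> carrier (Fgrp n)"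
    by (auto simp: carrier_Fgrp dest: reduced_ConsD)
  have "h n (x # w) = h n (red ([x] @ w))"
    using Cons.prems by (simp add: carrier_Fgrp red_reduced)
  also have "\<dots> = h n [x] \<otimes>\<^bsub>G n\<^esub> h n w"
    using letter w by (rule morphism_mult)
  also have "h n [x] = eval_letter (G n) (\<lambda>j. h n (gen j)) x"
    using x morphism_inverse_letter [OF x] by (cases x) (auto simp: eval_letter_def gen_def)
  finally show ?case
    using Cons.hyps [OF w] by simp
qed

lemma morphism_gen_tower: "h (Suc k) (gen 1) = dpow d 2 k 1 (h 1 (gen 1))"
proof (induct k)
  case (Suc k)
  have "Fd (Suc k) 2 (gen 1) = gen 1"
    by (simp add: Fd_gen Fd_letter_def numeral_2_eq_2)
  then have "h (Suc (Suc k)) (gen 1) = d (Suc k) 2 (h (Suc k) (gen 1))"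
    using morphism_Fd [of 2 "Suc k" "gen 1"] gen_in_Fgrp [of 1 "Suc k"] by simp
  then show ?case
    using Suc by simp
qed simp

lemma morphism_gen_shift: "j \<in> {1..m} \<Longrightarrow> h (m + t) (gen (j + t)) = dpow d 0 t m (h m (gen j))"
proof (induct t)
  case (Suc t)
  have "h (Suc (m + t)) (Fd (m + t) 0 (gen (j + t))) = d (m + t) 0 (h (m + t) (gen (j + t)))"
    using Suc.prems by (intro morphism_Fd gen_in_Fgrp) auto
  then show ?case
    using Suc by (simp add: Fd_gen Fd_letter_def)
qed simp

lemma morphism_gen:
  assumes "j \<in> {1..n}"
  shows "h n (gen j) = gen_value d (h 1 (gen 1)) n j"
proof -
  obtain t k where j: "j = Suc t" and n: "n = Suc (k + t)"
    using assms by (rule interval_index_cases)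
  have "h (Suc k + t) (gen (1 + t)) = dpow d 0 t (Suc k) (h (Suc k) (gen 1))"
    by (rule morphism_gen_shift) simp
  then show ?thesis
    using j n morphism_gen_tower [of k] by (simp add: gen_value_def)
qed

lemma morphism_gen_one_Z1: "h 1 (gen 1) \<in> Z1 G d"
proof -
  have gen: "gen 1 \<in> carrier (Fgrp 1)" "gen 1 \<in> carrier (Fgrp 2)" "gen 2 \<in> carrier (Fgrp 2)"
    by (simp_all add: gen_in_Fgrp)
  have "Fd 1 1 (gen 1) = red (gen 1 @ gen 2)"
    using Fd_gen [of 1 1 1] by (simp add: Fd_letter_def gen_def numeral_2_eq_2)
  then have "d 1 1 (h 1 (gen 1)) = h 2 (gen 1) \<otimes>\<^bsub>G 2\<^esub> h 2 (gen 2)"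
    using morphism_Fd [of 1 1 "gen 1"] morphism_mult [OF gen(2,3)] gen(1)
    by (simp add: numeral_2_eq_2)
  moreover have "d 1 2 (h 1 (gen 1)) = h 2 (gen 1)" and "d 1 0 (h 1 (gen 1)) = h 2 (gen 2)"
    using morphism_Fd [of 2 1 "gen 1"] morphism_Fd [of 0 1 "gen 1"] gen(1)
    by (simp_all add: Fd_gen Fd_letter_def numeral_2_eq_2)
  ultimately show ?thesis
    using morphism_closed [OF gen(1)] by (simp add: Z1_def)
qed

end

lemma morphism_eqI:
  assumes h: "h \<in> cosimp_morphs G d s" and h': "h' \<in> cosimp_morphs G d s"
    and eq: "h 1 (gen 1) = h' 1 (gen 1)"
  shows "h = h'"
proof (intro ext)
  fix n w
  show "h n w = h' n w"
  proof (cases "w \<in> carrier (Fgrp n)")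
    case True
    have "h n (gen j) = h' n (gen j)" if "j \<in> fst ` set w" for j
    proof -
      have j: "j \<in> {1..n}"
        using True that by (auto simp: carrier_Fgrp)
      show ?thesis
        using morphism_gen [OF h j] morphism_gen [OF h' j] eq by simp
    qed
    then have "eval_word (G n) (\<lambda>j. h n (gen j)) w = eval_word (G n) (\<lambda>j. h' n (gen j)) w"
      by (rule eval_word_cong)
    then show ?thesis
      using morphism_eval_word [OF h True] morphism_eval_word [OF h' True] by simp
  next
    case False
    then show ?thesis
      using h h' by (simp add: cosimp_morphs_def)
  qed
qed

end

theorem lemma3p2:
  fixes G :: "nat \<Rightarrow> ('a, 'b) monoid_scheme"
    and d :: "nat \<Rightarrow> nat \<Rightarrow> 'a \<Rightarrow> 'a"
    and s :: "nat \<Rightarrow> nat \<Rightarrow> 'a \<Rightarrow> 'a"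
  assumes "cosimplicial_group G d s"
  shows "bij_betw (\<lambda>h. h 1 (gen 1)) (cosimp_morphs G d s) (Z1 G d) \<and>
         (\<forall>b \<in> Z1 G d. \<forall>h \<in> cosimp_morphs G d s. h 1 (gen 1) = b \<longrightarrow>
            (\<forall>n j. 1 \<le> j \<and> j \<le> n \<longrightarrow>
               h n (gen j) = dpow d 0 (j - 1) (Suc n - j) (dpow d 2 (n - j) 1 b)))"
proof -
  interpret cosimplicial G d s
    using assms by (rule cosimplicial.intro)
  have "inj_on (\<lambda>h. h 1 (gen 1)) (cosimp_morphs G d s)"
    unfolding inj_on_def using morphism_eqI by blast
  moreover have "(\<lambda>h. h 1 (gen 1)) ` cosimp_morphs G d s = Z1 G d"
  proof
    show "(\<lambda>h. h 1 (gen 1)) ` cosimp_morphs G d s \<subseteq> Z1 G d"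
      using morphism_gen_one_Z1 by blast
    show "Z1 G d \<subseteq> (\<lambda>h. h 1 (gen 1)) ` cosimp_morphs G d s"
    proof
      fix b
      assume b: "b \<in> Z1 G d"
      show "b \<in> (\<lambda>h. h 1 (gen 1)) ` cosimp_morphs G d s"
        using cocycle_morphism_gen_one [OF b, symmetric] cocycle_morphism_in_morphs [OF b]
        by (rule image_eqI)
    qed
  qed
  ultimately have "bij_betw (\<lambda>h. h 1 (gen 1)) (cosimp_morphs G d s) (Z1 G d)"
    by (rule bij_betw_imageI)
  moreover have "h n (gen j) = dpow d 0 (j - 1) (Suc n - j) (dpow d 2 (n - j) 1 b)"
    if "h \<in> cosimp_morphs G d s" "h 1 (gen 1) = b" "1 \<le> j" "j \<le> n" for b h n j
    using morphism_gen [OF that(1), of j n] that by (simp add: gen_value_def)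
  ultimately show ?thesis
    by blast
qed

end
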